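(* Let $\mathcal C$ be a linear $[n,k]$ MDS code over $F$. Then $\mathcal C$ is $L$-MDS for every $L\in\mathbb Z^+$ with $L\ge\binom{n}{k}-k(n-k)$.
   Context: $F=\mathrm{GF}(q)$; $\mathsf w(\cdot)$ is Hamming weight. For $L\in\mathbb Z^+$ and nonnegative $\tau\in\frac{1}{L+1}\mathbb Z$, a code $\mathcal C\subseteq F^n$ is strongly-$(\tau,L)$-list decodable if there do not exist $y\in F^n$ and $L+1$ distinct codewords $c_0,\dots,c_L\in\mathcal C$ with $\sum_{m=0}^{L}\mathsf w(y-c_m)\le(L+1)\tau$. A linear $[n,k]$ code over $F$ is called $L$-MDS if it is strongly-$\left(\frac{L(n-k)}{L+1},L\right)$-list decodable; equivalently, any $L+1$ distinct vectors lying in a common coset of the code have total Hamming weight greater than $L(n-k)$. *)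

theory Defs
  imports "HOL-Analysis.Analysis"
begin

text \<open>Vectors of F^n are modelled as elements of type 'a^'n, where 'a is a finite
field (GF(q)) and n = CARD('n).\<close>

definition hweight :: "('a::zero)^'n \<Rightarrow> nat" where
  "hweight x = card {i. x $ i \<noteq> 0}"

definition linear_code :: "(('a::field)^'n) set \<Rightarrow> nat \<Rightarrow> bool" where
  "linear_code C k \<longleftrightarrow> vec.subspace C \<and> vec.dim C = k"

definition mds_code :: "(('a::field)^'n) set \<Rightarrow> nat \<Rightarrow> bool" where
  "mds_code C k \<longleftrightarrow> linear_code C k \<and>
     (\<forall>c\<in>C. c \<noteq> 0 \<longrightarrow> CARD('n) - k + 1 \<le> hweight c)"

definition strongly_list_decodable :: "(('a::ab_group_add)^'n) set \<Rightarrow> real \<Rightarrow> nat \<Rightarrow> bool" where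
  "strongly_list_decodable C \<tau> L \<longleftrightarrow>
     \<not> (\<exists>y c. (\<forall>m\<le>L. c m \<in> C) \<and> inj_on c {0..L} \<and>
            real (\<Sum>m=0..L. hweight (y - c m)) \<le> real (L + 1) * \<tau>)"

definition L_MDS :: "(('a::field)^'n) set \<Rightarrow> nat \<Rightarrow> nat \<Rightarrow> bool" where
  "L_MDS C k L \<longleftrightarrow> linear_code C k \<and>
     strongly_list_decodable C (real L * real (CARD('n) - k) / real (L + 1)) L"

end

theory Submission
  imports Defs
begin

text \<open>Let \<open>y\<close> be a word and \<open>c\<^sub>0, \<dots>, c\<^sub>L\<close> distinct codewords, and let \<open>Z\<^sub>m\<close> be the
  set of coordinates where \<open>y\<close> and \<open>c\<^sub>m\<close> agree. Two distinct codewords of an MDS code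
  agree in fewer than \<open>k\<close> coordinates, so no \<open>k\<close>-subset of coordinates lies in two of the
  \<open>Z\<^sub>m\<close>; hence \<open>\<Sum>\<^sub>m (|Z\<^sub>m| choose k) \<le> (n choose k)\<close>. Since \<open>(z choose k) \<ge> 1 + k(z - k)\<close>
  for \<open>z \<ge> k\<close>, this forces \<open>\<Sum>\<^sub>m |Z\<^sub>m| \<le> n + Lk - 1\<close> once \<open>L \<ge> (n choose k) - k(n - k)\<close>,
  i.e. the total distance \<open>\<Sum>\<^sub>m (n - |Z\<^sub>m|)\<close> exceeds \<open>L(n - k)\<close>.\<close>

lemma hweight_add_card_zeros:
  fixes x :: "('a::zero)^'n"
  shows "hweight x + card {i. x $ i = 0} = CARD('n)"
proof -
  have "{i. x $ i \<noteq> 0} = UNIV - {i. x $ i = 0}" by auto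
  then show ?thesis
    unfolding hweight_def by (metis add.commute card_Diff_subset card_mono finite
        le_add_diff_inverse subset_UNIV)
qed

lemma linear_code_dim_le_card: "linear_code (C :: ('a::field^'n) set) k \<Longrightarrow> k \<le> CARD('n)"
  unfolding linear_code_def using dim_subset_UNIV_cart_gen by metis

lemma mds_code_card_zeros_less:
  fixes C :: "('a::field^'n) set"
  assumes "mds_code C k" "x \<in> C" "x \<noteq> 0"
  shows "card {i. x $ i = 0} < k"
proof -
  have "CARD('n) - k + 1 \<le> hweight x" using assms unfolding mds_code_def by blast
  moreover have "k \<le> CARD('n)"
    using assms(1) linear_code_dim_le_card unfolding mds_code_def by blast
  ultimately show ?thesis using hweight_add_card_zeros[of x] by linarith
qed

lemma sum_choose_le_choose_card:
  fixes Z :: "'i \<Rightarrow> 'a set"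
  assumes "finite U" "finite I" "\<And>m. m \<in> I \<Longrightarrow> Z m \<subseteq> U"
    and small_inter: "\<And>m m'. m \<in> I \<Longrightarrow> m' \<in> I \<Longrightarrow> m \<noteq> m' \<Longrightarrow> card (Z m \<inter> Z m') < k"
  shows "(\<Sum>m\<in>I. card (Z m) choose k) \<le> card U choose k"
proof -
  define F where "F m = {S. S \<subseteq> Z m \<and> card S = k}" for m
  have fin_Z: "finite (Z m)" if "m \<in> I" for m
    using assms(1,3) that finite_subset by blast
  have disj: "F m \<inter> F m' = {}" if "m \<in> I" "m' \<in> I" "m \<noteq> m'" for m m'
  proof (rule ccontr)
    assume "F m \<inter> F m' \<noteq> {}"
    then obtain S where "S \<subseteq> Z m \<inter> Z m'" "card S = k" by (auto simp: F_def)
    then have "k \<le> card (Z m \<inter> Z m')"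
      using fin_Z[OF \<open>m \<in> I\<close>] by (metis card_mono finite_Int)
    then show False using small_inter[OF that] by simp
  qed
  have "(\<Sum>m\<in>I. card (Z m) choose k) = (\<Sum>m\<in>I. card (F m))"
    unfolding F_def by (intro sum.cong refl n_subsets[symmetric] fin_Z)
  also have "\<dots> = card (\<Union>(F ` I))"
  proof (rule card_UN_disjoint[symmetric])
    show "\<forall>m\<in>I. finite (F m)"
      unfolding F_def using fin_Z by (auto intro: finite_subset[of _ "Pow (Z _)"])
  qed (use assms(2) disj in auto)
  also have "\<dots> \<le> card {S. S \<subseteq> U \<and> card S = k}"
    using assms(1,3) by (intro card_mono) (auto simp: F_def)
  also have "\<dots> = card U choose k" using assms(1) by (rule n_subsets)
  finally show ?thesis .
qed

lemma one_add_mult_diff_le_choose: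
  assumes "1 \<le> k" "k \<le> z"
  shows "1 + k * (z - k) \<le> z choose k"
  using assms(2)
proof (induction z rule: nat_induct_at_least)
  case base
  then show ?case by simp
next
  case (Suc z)
  obtain j where j: "k = Suc j" using assms(1) by (cases k) auto
  have "k \<le> z choose j"
    using Suc(1) j binomial_right_mono[of "Suc j" z j] by simp
  moreover have "Suc z - k = Suc (z - k)" using Suc(1) by simp
  ultimately show ?case using Suc(2) j by simp
qed

lemma add_le_of_add_mult_le:
  fixes p e k t L :: nat
  assumes "1 \<le> k" "p + k * e \<le> L + k * t" "p \<le> L + 1"
  shows "p + e \<le> t + L"
proof (cases "e < t")
  case True
  then show ?thesis using assms(3) by linarith
next
  case False
  then have "(k - 1) * t \<le> (k - 1) * e" by simp
  moreover have "k * e = e + (k - 1) * e" "k * t = t + (k - 1) * t"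
    using assms(1) by (simp_all add: mult_eq_if)
  ultimately show ?thesis using assms(2) by linarith
qed

lemma sum_le_of_sum_choose_le:
  fixes z :: "'i \<Rightarrow> nat"
  assumes "finite I" "card I = L + 1" "1 \<le> k" "k \<le> n"
    and sum_choose: "(\<Sum>m\<in>I. z m choose k) \<le> n choose k"
    and "n choose k \<le> L + k * (n - k)"
  shows "(\<Sum>m\<in>I. z m) + 1 \<le> n + L * k"
proof -
  define P where "P = {m\<in>I. k \<le> z m}"
  define N where "N = {m\<in>I. z m < k}"
  define e where "e = (\<Sum>m\<in>P. z m - k)"
  have fin: "finite P" "finite N" and disj: "P \<inter> N = {}" and I: "I = P \<union> N"
    using assms(1) unfolding P_def N_def by auto
  have card_PN: "card P + card N = L + 1"
    using card_Un_disjoint[OF fin disj] I assms(2) by simp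
  have "card P + k * e = (\<Sum>m\<in>P. 1 + k * (z m - k))"
    by (simp only: e_def sum.distrib sum_distrib_left) simp
  also have "\<dots> \<le> (\<Sum>m\<in>P. z m choose k)"
    by (intro sum_mono one_add_mult_diff_le_choose) (use assms(3) in \<open>auto simp: P_def\<close>)
  also have "\<dots> \<le> (\<Sum>m\<in>I. z m choose k)"
    using assms(1) by (intro sum_mono2) (auto simp: P_def)
  finally have "card P + k * e \<le> L + k * (n - k)"
    using sum_choose assms(6) by linarith
  then have excess: "card P + e \<le> n - k + L"
    using add_le_of_add_mult_le[OF assms(3)] card_PN by force
  have "(\<Sum>m\<in>P. z m) = (\<Sum>m\<in>P. (z m - k) + k)"
    by (rule sum.cong) (auto simp: P_def)
  then have sum_P: "(\<Sum>m\<in>P. z m) = e + card P * k"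
    by (simp add: sum.distrib e_def)
  have sum_N: "(\<Sum>m\<in>N. z m) \<le> card N * (k - 1)"
    using sum_bounded_above[of N z "k - 1"] by (force simp: N_def)
  have "(\<Sum>m\<in>I. z m) = (\<Sum>m\<in>P. z m) + (\<Sum>m\<in>N. z m)"
    using sum.union_disjoint[OF fin disj] I by simp
  moreover obtain j where j: "k = Suc j" using assms(3) by (cases k) auto
  moreover have "card P * j + card N * j = L * j + j"
    using card_PN by (metis add_mult_distrib mult_Suc Suc_eq_plus1 add.commute)
  ultimately show ?thesis using sum_P sum_N excess assms(4) by simp
qed

lemma mds_code_sum_hweight_coset_gt:
  fixes C :: "('a::field^'n) set" and y :: "'a^'n"
  assumes mds: "mds_code C k" and "1 \<le> L"
    and codewords: "\<And>m. m \<le> L \<Longrightarrow> c m \<in> C" and inj: "inj_on c {0..L}"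
    and L_ge: "CARD('n) choose k \<le> L + k * (CARD('n) - k)"
  shows "L * (CARD('n) - k) < (\<Sum>m=0..L. hweight (y - c m))"
proof -
  have k_le: "k \<le> CARD('n)"
    using mds linear_code_dim_le_card unfolding mds_code_def by blast
  define Z where "Z m = {i. (y - c m) $ i = 0}" for m
  have small_inter: "card (Z m \<inter> Z m') < k"
    if "m \<in> {0..L}" "m' \<in> {0..L}" "m \<noteq> m'" for m m'
  proof -
    have "vec.subspace C" using mds by (simp add: mds_code_def linear_code_def)
    then have "c m - c m' \<in> C" using codewords that by (simp add: vec.subspace_diff)
    moreover have "c m - c m' \<noteq> 0" using inj that by (auto dest: inj_onD)
    ultimately have "card {i. (c m - c m') $ i = 0} < k"
      using mds_code_card_zeros_less[OF mds] by blast
    moreover have "Z m \<inter> Z m' \<subseteq> {i. (c m - c m') $ i = 0}"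
      by (auto simp: Z_def)
    ultimately show ?thesis by (meson card_mono finite le_less_trans)
  qed
  have "card (Z 0 \<inter> Z 1) < k" using small_inter \<open>1 \<le> L\<close> by simp
  then have "1 \<le> k" by simp
  have "(\<Sum>m=0..L. card (Z m) choose k) \<le> CARD('n) choose k"
    using sum_choose_le_choose_card[of UNIV "{0..L}" Z] small_inter by simp
  then have "(\<Sum>m=0..L. card (Z m)) + 1 \<le> CARD('n) + L * k"
    using sum_le_of_sum_choose_le[of "{0..L}" L k "CARD('n)" "\<lambda>m. card (Z m)"]
      \<open>1 \<le> k\<close> k_le L_ge by simp
  moreover have "(\<Sum>m=0..L. hweight (y - c m)) + (\<Sum>m=0..L. card (Z m)) = (L + 1) * CARD('n)"
    unfolding Z_def sum.distrib[symmetric] hweight_add_card_zeros by simp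
  moreover have "L * (CARD('n) - k) + L * k = L * CARD('n)"
    using k_le by (metis add_mult_distrib2 le_add_diff_inverse2)
  ultimately show ?thesis by simp
qed

theorem mainTheorem12:
  fixes C :: "(('a::{field,finite})^'n) set" and k L :: nat
  assumes "mds_code C k"
    and "1 \<le> L"
    and "int L \<ge> int (CARD('n) choose k) - int k * int (CARD('n) - k)"
  shows "L_MDS C k L"
proof -
  have "int (CARD('n) choose k) \<le> int (L + k * (CARD('n) - k))"
    using assms(3) by simp
  then have L_ge: "CARD('n) choose k \<le> L + k * (CARD('n) - k)"
    by (simp only: of_nat_le_iff)
  have "strongly_list_decodable C (real L * real (CARD('n) - k) / real (L + 1)) L"
    unfolding strongly_list_decodable_def
  proof (intro notI, elim exE conjE)
    fix y c
    assume codewords: "\<forall>m\<le>L. c m \<in> C" and inj: "inj_on c {0..L}"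
      and "real (\<Sum>m=0..L. hweight (y - c m))
             \<le> real (L + 1) * (real L * real (CARD('n) - k) / real (L + 1))"
    then have "real (\<Sum>m=0..L. hweight (y - c m)) \<le> real (L * (CARD('n) - k))"
      by simp
    moreover have "L * (CARD('n) - k) < (\<Sum>m=0..L. hweight (y - c m))"
      using mds_code_sum_hweight_coset_gt[OF assms(1,2) _ inj L_ge] codewords by blast
    ultimately show False by linarith
  qed
  then show ?thesis
    using assms(1) unfolding L_MDS_def mds_code_def by blast
qed

end
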